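(* Let $a<b$ be real numbers and let $\varphi$ be a function holomorphic on the strip $D(a,b)=\{s\in\mathbb{C}: a<\Re s<b\}$. Suppose $\varphi$ is strongly universal in $D(a,b)$, i.e. for every compact set $K\subset D(a,b)$ with connected complement, every $f\in H^c(K)$ and every $\varepsilon>0$, $$\liminf_{T\to\infty}\frac{1}{T}\,\mathrm{meas}\Big\{\tau\in[0,T]\;:\;\sup_{s\in K}|\varphi(s+i\tau)-f(s)|<\varepsilon\Big\}>0 .$$ Then for any real $\sigma_1,\sigma_2$ with $a<\sigma_1<\sigma_2<b$ there exist constants $C>0$ and $T_0>0$ such that $$N(T;\sigma_1,\sigma_2;\varphi)\ge C\,T\qquad\text{for all } T\ge T_0 .$$
   Context: $H^c(K)$ denotes the set of complex-valued functions that are continuous on $K$ and holomorphic in the interior of $K$. $\mathrm{meas}$ denotes Lebesgue measure. For a function $\varphi$ holomorphic on $D(a,b)$ and $a<\sigma_1<\sigma_2<b$, $N(T;\sigma_1,\sigma_2;\varphi)$ denotes the number of zeros $\rho$ of $\varphi$ (counted with multiplicity) satisfying $\sigma_1\le\Re\rho\le\sigma_2$ and $0\le\Im\rho\le T$. *)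

theory Defs
  imports "HOL-Analysis.Analysis"
begin

definition strip :: "real \<Rightarrow> real \<Rightarrow> complex set" where
  "strip a b = {s. a < Re s \<and> Re s < b}"

definition Hc :: "complex set \<Rightarrow> (complex \<Rightarrow> complex) set" where
  "Hc K = {f. continuous_on K f \<and> f holomorphic_on interior K}"

definition strongly_universal :: "real \<Rightarrow> real \<Rightarrow> (complex \<Rightarrow> complex) \<Rightarrow> bool" where
  "strongly_universal a b \<phi> \<longleftrightarrow>
     (\<forall>K f \<epsilon>. compact K \<and> K \<subseteq> strip a b \<and> connected (- K) \<and> f \<in> Hc K \<and> \<epsilon> > 0 \<longrightarrow>
        Liminf at_top (\<lambda>T::real. ereal (measure lebesgue
           {\<tau> \<in> {0..T}. (SUP s\<in>K. ereal (cmod (\<phi> (s + of_real \<tau> * \<i>) - f s))) < ereal \<epsilon>} / T)) > 0)"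

definition zero_mult :: "(complex \<Rightarrow> complex) \<Rightarrow> complex \<Rightarrow> ereal" where
  "zero_mult \<phi> \<rho> = (if \<exists>n. (deriv ^^ n) \<phi> \<rho> \<noteq> 0
      then ereal (real (LEAST n. (deriv ^^ n) \<phi> \<rho> \<noteq> 0)) else \<infinity>)"

definition zero_count :: "real \<Rightarrow> real \<Rightarrow> real \<Rightarrow> (complex \<Rightarrow> complex) \<Rightarrow> ereal" where
  "zero_count T \<sigma>1 \<sigma>2 \<phi> =
     (let Z = {\<rho>. \<phi> \<rho> = 0 \<and> \<sigma>1 \<le> Re \<rho> \<and> Re \<rho> \<le> \<sigma>2 \<and> 0 \<le> Im \<rho> \<and> Im \<rho> \<le> T}
      in if finite Z then (\<Sum>\<rho>\<in>Z. zero_mult \<phi> \<rho>) else \<infinity>)"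

end

theory Submission
  imports Defs "HOL-Complex_Analysis.Complex_Analysis"
begin

(* Fix the disc K = cball z r with centre z = (\<sigma>1 + \<sigma>2)/2 on the real axis
   and radius r = (\<sigma>2 - \<sigma>1)/2, so that K and all its vertical translates lie in the
   closed strip \<sigma>1 \<le> Re s \<le> \<sigma>2.  Strong universality, applied to the target
   f(s) = s - z and the accuracy r/2, says that the set of shifts \<tau> \<in> [0,T] for which
   \<phi>(s + i\<tau>) is (r/2)-close to s - z on K has measure at least c T for large T.
   A Rouche-type argument (minimum modulus principle) shows that each such shift \<tau> yields
   a zero of \<phi> within distance r of z + i\<tau>.  Hence those shifts are covered by the
   r-neighbourhoods of the imaginary parts of the zeros in the rectangle, plus two boundary
   intervals, which bounds their measure by 2r (1 + number of zeros).  Comparing the two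
   bounds gives N(T) \<ge> c T / (4 r) for large T. *)

text \<open>A function that is uniformly closer than r/2 to the identity map s \<mapsto> s - z on the
  closed disc cball z r has a zero in the open disc: otherwise 1/g would be holomorphic on
  the disc and, by the maximum modulus principle, |1/g(z)| would be bounded by its boundary
  values, which are smaller than 2/r, although |g(z)| < r/2.\<close>
lemma zero_near_identity:
  fixes g :: "complex \<Rightarrow> complex"
  assumes cont: "continuous_on (cball z r) g" and hol: "g holomorphic_on ball z r"
    and r: "r > 0"
    and close: "\<And>s. s \<in> cball z r \<Longrightarrow> cmod (g s - (s - z)) < r/2"
  shows "\<exists>\<rho>\<in>ball z r. g \<rho> = 0"
proof (rule ccontr)
  assume "\<not> ?thesis"
  hence nz_ball: "\<And>s. s \<in> ball z r \<Longrightarrow> g s \<noteq> 0" by auto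
  have sphere_bound: "cmod (g s) > r/2" if "s \<in> sphere z r" for s
  proof -
    have "cmod (s - z) = r" using that by (simp add: dist_norm norm_minus_commute)
    moreover have "cmod (s - z) \<le> cmod (g s) + cmod (g s - (s - z))"
      by (metis add.commute diff_add_cancel norm_triangle_ineq4 norm_minus_commute norm_triangle_ineq)
    ultimately show ?thesis using close[of s] that by auto
  qed
  have nz_cball: "g s \<noteq> 0" if "s \<in> cball z r" for s
    using nz_ball sphere_bound[of s] that r by (cases "s \<in> ball z r") auto
  have "cmod (inverse (g z)) \<le> 2/r"
  proof (rule maximum_modulus_frontier[where S="cball z r" and f="\<lambda>s. inverse (g s)"])
    show "(\<lambda>s. inverse (g s)) holomorphic_on interior (cball z r)"
      using hol nz_ball by (auto intro!: holomorphic_intros)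
    show "continuous_on (closure (cball z r)) (\<lambda>s. inverse (g s))"
      using cont nz_cball by (auto intro!: continuous_intros)
    fix s assume "s \<in> frontier (cball z r)"
    then have "cmod (g s) > r/2" using r sphere_bound by (simp add: frontier_cball)
    then show "cmod (inverse (g s)) \<le> 2/r"
      using r less_imp_inverse_less[of "r/2" "cmod (g s)"] by (simp add: norm_inverse)
  qed (use r in auto)
  moreover have "cmod (g z) < r/2" "g z \<noteq> 0" using close[of z] nz_ball[of z] r by auto
  ultimately show False
    using r less_imp_inverse_less[of "cmod (g z)" "r/2"] by (simp add: norm_inverse)
qed

lemma measure_le_interval_cover:
  fixes G :: "real set" and h :: "'a \<Rightarrow> real"
  assumes "finite Y" and "r \<ge> 0"
    and cover: "G \<subseteq> {0..r} \<union> {T-r..T} \<union> (\<Union>y\<in>Y. {h y - r .. h y + r})"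
  shows "measure lebesgue G \<le> 2*r + 2*r * real (card Y)"
proof (cases "G \<in> sets lebesgue")
  case False
  then show ?thesis using assms by (simp add: measure_notin_sets)
next
  case True
  let ?U = "{0..r} \<union> {T-r..T} \<union> (\<Union>y\<in>Y. {h y - r .. h y + r})"
  have "measure lebesgue G \<le> measure lebesgue ?U"
    using \<open>finite Y\<close> by (intro measure_mono_fmeasurable[OF cover True])
      (auto intro!: fmeasurable.Un fmeasurable.finite_UN)
  also have "\<dots> \<le> measure lebesgue ({0..r} \<union> {T-r..T})
                    + measure lebesgue (\<Union>y\<in>Y. {h y - r .. h y + r})"
    using \<open>finite Y\<close> by (intro measure_Un_le) auto
  also have "\<dots> \<le> (measure lebesgue {0..r} + measure lebesgue {T-r..T})
                    + (\<Sum>y\<in>Y. measure lebesgue {h y - r .. h y + r})"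
    using \<open>finite Y\<close> by (intro add_mono measure_Un_le measure_UNION_le) auto
  also have "\<dots> = 2*r + 2*r * real (card Y)"
    using \<open>r \<ge> 0\<close> by simp
  finally show ?thesis .
qed

definition rect_zeros :: "real \<Rightarrow> real \<Rightarrow> real \<Rightarrow> (complex \<Rightarrow> complex) \<Rightarrow> complex set" where
  "rect_zeros T \<sigma>1 \<sigma>2 \<phi> =
     {\<rho>. \<phi> \<rho> = 0 \<and> \<sigma>1 \<le> Re \<rho> \<and> Re \<rho> \<le> \<sigma>2 \<and> 0 \<le> Im \<rho> \<and> Im \<rho> \<le> T}"

lemma zero_mult_ge_1: "\<phi> \<rho> = 0 \<Longrightarrow> zero_mult \<phi> \<rho> \<ge> 1"
proof (cases "\<exists>n. (deriv ^^ n) \<phi> \<rho> \<noteq> 0")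
  case True
  assume "\<phi> \<rho> = 0"
  then have "(LEAST n. (deriv ^^ n) \<phi> \<rho> \<noteq> 0) \<noteq> 0"
    using LeastI_ex[OF True] by (metis funpow_0)
  then show ?thesis using True by (simp add: zero_mult_def)
qed (simp add: zero_mult_def)

lemma zero_count_ge:
  assumes "finite (rect_zeros T \<sigma>1 \<sigma>2 \<phi>) \<Longrightarrow> x \<le> real (card (rect_zeros T \<sigma>1 \<sigma>2 \<phi>))"
  shows "ereal x \<le> zero_count T \<sigma>1 \<sigma>2 \<phi>"
proof (cases "finite (rect_zeros T \<sigma>1 \<sigma>2 \<phi>)")
  case True
  let ?Z = "rect_zeros T \<sigma>1 \<sigma>2 \<phi>"
  have "ereal x \<le> (\<Sum>\<rho>\<in>?Z. 1)"
    using assms[OF True] by (simp add: one_ereal_def)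
  also have "\<dots> \<le> (\<Sum>\<rho>\<in>?Z. zero_mult \<phi> \<rho>)"
    by (intro sum_mono zero_mult_ge_1) (simp add: rect_zeros_def)
  finally show ?thesis
    using True by (simp add: zero_count_def rect_zeros_def[symmetric] Let_def)
qed (simp add: zero_count_def rect_zeros_def Let_def)

definition approx_shifts ::
    "(complex \<Rightarrow> complex) \<Rightarrow> complex set \<Rightarrow> (complex \<Rightarrow> complex) \<Rightarrow> real \<Rightarrow> real \<Rightarrow> real set" where
  "approx_shifts \<phi> K f \<epsilon> T =
     {\<tau> \<in> {0..T}. (SUP s\<in>K. ereal (cmod (\<phi> (s + of_real \<tau> * \<i>) - f s))) < ereal \<epsilon>}"

lemma approx_shiftsD:
  assumes "\<tau> \<in> approx_shifts \<phi> K f \<epsilon> T"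
  shows "0 \<le> \<tau>" "\<tau> \<le> T" "\<And>s. s \<in> K \<Longrightarrow> cmod (\<phi> (s + of_real \<tau> * \<i>) - f s) < \<epsilon>"
proof -
  fix s assume "s \<in> K"
  then have "ereal (cmod (\<phi> (s + of_real \<tau> * \<i>) - f s))
               \<le> (SUP s\<in>K. ereal (cmod (\<phi> (s + of_real \<tau> * \<i>) - f s)))"
    by (rule SUP_upper)
  also have "\<dots> < ereal \<epsilon>" using assms by (simp add: approx_shifts_def)
  finally show "cmod (\<phi> (s + of_real \<tau> * \<i>) - f s) < \<epsilon>" by simp
qed (use assms in \<open>auto simp: approx_shifts_def\<close>)

lemma strongly_universal_approx_shifts:
  assumes "strongly_universal a b \<phi>" and "compact K" "K \<subseteq> strip a b" "connected (- K)"
    and "f \<in> Hc K" "\<epsilon> > 0"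
  shows "Liminf at_top (\<lambda>T. ereal (measure lebesgue (approx_shifts \<phi> K f \<epsilon> T) / T)) > 0"
  using assms unfolding strongly_universal_def approx_shifts_def by blast

lemma linear_bound_from_liminf:
  fixes m :: "real \<Rightarrow> real"
  assumes "Liminf at_top (\<lambda>T. ereal (m T / T)) > 0"
  shows "\<exists>c>0. \<exists>N\<ge>1. \<forall>T\<ge>N. c * T < m T"
proof -
  obtain c where c: "0 < ereal c" "ereal c < Liminf at_top (\<lambda>T. ereal (m T / T))"
    using ereal_dense2[OF assms] by blast
  from less_LiminfD[OF c(2)] obtain N where N: "\<And>T. T \<ge> N \<Longrightarrow> c < m T / T"
    by (auto simp: eventually_at_top_linorder)
  have "c * T < m T" if "T \<ge> max N 1" for T
    using N[of T] that by (simp add: field_simps)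
  then show ?thesis using c(1) by (intro exI[of _ c] conjI exI[of _ "max N 1"]) auto
qed

lemma zero_near_approx_shift:
  assumes hol: "\<phi> holomorphic_on S" and r: "r > 0"
    and inside: "\<And>s. s \<in> cball z r \<Longrightarrow> s + of_real \<tau> * \<i> \<in> S"
    and \<tau>: "\<tau> \<in> approx_shifts \<phi> (cball z r) (\<lambda>s. s - z) (r/2) T"
  shows "\<exists>\<rho>. \<phi> \<rho> = 0 \<and> dist \<rho> (z + of_real \<tau> * \<i>) < r"
proof -
  have "continuous_on (cball z r) (\<lambda>s. \<phi> (s + of_real \<tau> * \<i>))"
    by (rule continuous_on_compose2[OF holomorphic_on_imp_continuous_on[OF hol]])
      (auto intro!: continuous_intros inside)
  moreover have "(\<lambda>s. \<phi> (s + of_real \<tau> * \<i>)) holomorphic_on ball z r"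
    by (rule holomorphic_on_compose_gen[where g=\<phi> and t=S, unfolded o_def])
      (auto intro!: holomorphic_intros hol inside)
  ultimately obtain \<rho> where "\<rho> \<in> ball z r" "\<phi> (\<rho> + of_real \<tau> * \<i>) = 0"
    using zero_near_identity[OF _ _ r approx_shiftsD(3)[OF \<tau>]] by blast
  then show ?thesis
    by (intro exI[of _ "\<rho> + of_real \<tau> * \<i>"]) (auto simp: dist_norm norm_minus_commute)
qed

lemma Re_bounds_cball:
  assumes "s \<in> cball c r"
  shows "Re c - r \<le> Re s \<and> Re s \<le> Re c + r"
  using abs_Re_le_cmod[of "s - c"] assms by (auto simp: dist_norm norm_minus_commute abs_le_iff)

text \<open>The bound is
  stated in ereal so that it also covers infinitely many zeros.\<close>
lemma approx_shifts_measure_le_zero_count: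
  assumes hol: "\<phi> holomorphic_on strip a b"
    and "a < \<sigma>1" "\<sigma>1 < \<sigma>2" "\<sigma>2 < b"
  defines "r \<equiv> (\<sigma>2 - \<sigma>1) / 2" and "z \<equiv> complex_of_real ((\<sigma>1 + \<sigma>2) / 2)"
  shows "ereal ((measure lebesgue (approx_shifts \<phi> (cball z r) (\<lambda>s. s - z) (r/2) T) - 2*r) / (2*r))
           \<le> zero_count T \<sigma>1 \<sigma>2 \<phi>"
proof (rule zero_count_ge)
  let ?G = "approx_shifts \<phi> (cball z r) (\<lambda>s. s - z) (r/2) T"
  let ?Z = "rect_zeros T \<sigma>1 \<sigma>2 \<phi>"
  assume "finite ?Z"
  have r: "r > 0" using assms by (simp add: r_def)
  have Re_disc: "\<sigma>1 \<le> Re s \<and> Re s \<le> \<sigma>2" if "s \<in> cball (z + of_real \<tau> * \<i>) r" for s \<tau>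
    using Re_bounds_cball[OF that] by (simp add: z_def r_def field_simps)
  have "s + of_real \<tau> * \<i> \<in> strip a b" if "s \<in> cball z r" for s \<tau>
    using Re_disc[of "s + of_real \<tau> * \<i>" \<tau>] that assms by (auto simp: strip_def dist_norm)
  then have zero_near: "\<exists>\<rho>. \<phi> \<rho> = 0 \<and> dist \<rho> (z + of_real \<tau> * \<i>) < r" if "\<tau> \<in> ?G" for \<tau>
    using zero_near_approx_shift[OF hol r _ that] by blast
  have "?G \<subseteq> {0..r} \<union> {T-r..T} \<union> (\<Union>\<rho>\<in>?Z. {Im \<rho> - r .. Im \<rho> + r})"
  proof
    fix \<tau> assume "\<tau> \<in> ?G"
    then obtain \<rho> where \<rho>: "\<phi> \<rho> = 0" "dist \<rho> (z + of_real \<tau> * \<i>) < r"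
      using zero_near by blast
    have "\<bar>Im \<rho> - \<tau>\<bar> < r"
      using abs_Im_le_cmod[of "\<rho> - (z + of_real \<tau> * \<i>)"] \<rho>(2) by (simp add: dist_norm z_def)
    moreover have "\<sigma>1 \<le> Re \<rho> \<and> Re \<rho> \<le> \<sigma>2"
      using Re_disc[of \<rho> \<tau>] \<rho>(2) by (simp add: dist_commute)
    ultimately show "\<tau> \<in> {0..r} \<union> {T-r..T} \<union> (\<Union>\<rho>\<in>?Z. {Im \<rho> - r .. Im \<rho> + r})"
      using approx_shiftsD(1,2)[OF \<open>\<tau> \<in> ?G\<close>] \<rho>(1)
      by (cases "Im \<rho> < 0 \<or> T < Im \<rho>") (auto simp: rect_zeros_def abs_less_iff)
  qed
  from measure_le_interval_cover[OF \<open>finite ?Z\<close> _ this] r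
  show "(measure lebesgue ?G - 2*r) / (2*r) \<le> real (card ?Z)"
    by (simp add: field_simps)
qed

theorem theorem5p2:
  fixes a b \<sigma>1 \<sigma>2 :: real and \<phi> :: "complex \<Rightarrow> complex"
  assumes "a < b"
    and hol: "\<phi> holomorphic_on strip a b"
    and univ: "strongly_universal a b \<phi>"
    and "a < \<sigma>1" and "\<sigma>1 < \<sigma>2" and "\<sigma>2 < b"
  shows "\<exists>C>0. \<exists>T0>0. \<forall>T\<ge>T0. ereal (C * T) \<le> zero_count T \<sigma>1 \<sigma>2 \<phi>"
proof -
  define r where "r = (\<sigma>2 - \<sigma>1) / 2"
  define z where "z = complex_of_real ((\<sigma>1 + \<sigma>2) / 2)"
  let ?G = "approx_shifts \<phi> (cball z r) (\<lambda>s. s - z) (r/2)"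
  have r: "r > 0" using assms by (simp add: r_def)
  have "Re z - r = \<sigma>1" "Re z + r = \<sigma>2" by (simp_all add: z_def r_def field_simps)
  then have "cball z r \<subseteq> strip a b"
    using assms Re_bounds_cball[of _ z r] by (fastforce simp: strip_def)
  moreover have "(\<lambda>s. s - z) \<in> Hc (cball z r)"
    by (auto simp: Hc_def intro!: holomorphic_intros continuous_intros)
  ultimately have "Liminf at_top (\<lambda>T. ereal (measure lebesgue (?G T) / T)) > 0"
    using r by (intro strongly_universal_approx_shifts[OF univ])
      (auto intro: connected_complement_bounded_convex)
  then obtain c N where c: "c > 0" "N \<ge> 1" and N: "\<And>T. T \<ge> N \<Longrightarrow> c * T < measure lebesgue (?G T)"
    using linear_bound_from_liminf[where m="\<lambda>T. measure lebesgue (?G T)"] by blast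
  show ?thesis
  proof (rule exI[of _ "c / (4*r)"], intro conjI exI[of _ "max N (4*r / c)"] allI impI)
    fix T assume T: "max N (4*r / c) \<le> T"
    then have "ereal (c / (4*r) * T) \<le> ereal ((measure lebesgue (?G T) - 2*r) / (2*r))"
      using N[of T] c r by (simp add: field_simps)
    also have "\<dots> \<le> zero_count T \<sigma>1 \<sigma>2 \<phi>"
      using approx_shifts_measure_le_zero_count[OF hol assms(4-6)] by (simp add: r_def z_def)
    finally show "ereal (c / (4*r) * T) \<le> zero_count T \<sigma>1 \<sigma>2 \<phi>" .
  qed (use c r in auto)
qed

end
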